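(* For real $x>0$, $y>0$ with $xy<2\pi$, $$\sum_{n=0}^{\infty} B_n R_n(y)\,x^n=\frac{e^{y}}{x}\Phi(1,2,x^{-1})-y\,\Phi(e^{-xy},1,x^{-1})-\frac{1}{x}\Phi(e^{-xy},2,x^{-1})+x(y+1-e^{y}).$$
   Context: For an integer $n\ge 0$ and complex $y$, $R_n(y)=e^y-1-\frac{y}{1!}-\frac{y^2}{2!}-\dots-\frac{y^n}{n!}=e^y-\sum_{k=0}^n\frac{y^k}{k!}$. $B_n$ are the Bernoulli numbers, defined by $\frac{z}{e^z-1}=\sum_{n\ge0}B_n\frac{z^n}{n!}$ ($|z|<2\pi$). $\Phi(z,s,a)=\sum_{n=0}^{\infty}\frac{z^n}{(n+a)^s}$ is the Lerch transcendent. *)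

theory Defs
  imports "HOL-Analysis.Analysis" "HOL-Computational_Algebra.Formal_Power_Series"
begin

definition bernoulli :: "nat \<Rightarrow> real" where
  "bernoulli n = of_rat (fps_nth (fps_X / (fps_exp (1::rat) - 1)) n * fact n)"

definition expR :: "nat \<Rightarrow> real \<Rightarrow> real" where
  "expR n y = exp y - (\<Sum>k\<le>n. y ^ k / fact k)"

definition lerch :: "real \<Rightarrow> nat \<Rightarrow> real \<Rightarrow> real" where
  "lerch z s a = (\<Sum>n. z ^ n / (real n + a) ^ s)"

end

theory Submission
  imports Defs "HOL-Complex_Analysis.Complex_Analysis"
begin

text \<open>Writing \<open>R\<^sub>n(y)\<close> as the integral of \<open>e^(y-t) t^n/n!\<close> over \<open>[0,y]\<close>, the series becomes
  the integral of \<open>e^(y-t) g(xt)\<close>, where \<open>g(u) = u/(e^u - 1) = \<Sum> B\<^sub>n u^n/n!\<close>; integrating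
  termwise is justified by uniform convergence, as \<open>xt \<le> xy < 2\<pi>\<close>. Expanding instead
  \<open>g(u) = u \<Sum>_{k\<ge>1} e^(-ku)\<close>, whose remainder after \<open>K\<close> terms contributes at most \<open>e^y/(xK)\<close>,
  the \<open>k\<close>-th integral is a combination of the \<open>k\<close>-th terms of the three Lerch series. These
  series also have a term for \<open>k = 0\<close>; it accounts for \<open>x(y + 1 - e^y)\<close>.\<close>

definition fps_of_rat :: "rat fps \<Rightarrow> 'a::field_char_0 fps" where
  "fps_of_rat f = Abs_fps (\<lambda>n. of_rat (fps_nth f n))"

lemma fps_nth_fps_of_rat [simp]: "fps_nth (fps_of_rat f) n = of_rat (fps_nth f n)"
  by (simp add: fps_of_rat_def)

lemma fps_of_rat_mult: "fps_of_rat (f * g) = (fps_of_rat f * fps_of_rat g :: 'a::field_char_0 fps)"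
  by (simp add: fps_eq_iff fps_mult_nth of_rat_sum of_rat_mult)

lemma of_rat_fact: "of_rat (fact n) = (fact n :: 'a::field_char_0)"
  by (metis of_nat_fact of_rat_of_nat_eq)

lemma fps_of_rat_exp_minus_1: "fps_of_rat (fps_exp 1 - 1) = (fps_exp 1 - 1 :: 'a::field_char_0 fps)"
  by (simp add: fps_eq_iff of_rat_diff of_rat_divide of_rat_fact)

lemma fps_of_rat_X: "fps_of_rat fps_X = (fps_X :: 'a::field_char_0 fps)"
  by (simp add: fps_eq_iff fps_X_def)

lemma subdegree_fps_exp_minus_1: "subdegree (fps_exp 1 - 1 :: 'a::field_char_0 fps) = 1"
  by (rule subdegreeI) auto

lemma bernoulli_fps_of_rat:
  "fps_X / (fps_exp 1 - 1) = (fps_of_rat (fps_X / (fps_exp 1 - 1)) :: 'a::field_char_0 fps)"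
proof -
  have "fps_of_rat (fps_X / (fps_exp 1 - 1)) * (fps_exp 1 - 1)
          = (fps_of_rat (fps_X / (fps_exp 1 - 1) * (fps_exp 1 - 1)) :: 'a fps)"
    by (simp only: fps_of_rat_mult fps_of_rat_exp_minus_1)
  also have "\<dots> = fps_X"
    using subdegree_fps_exp_minus_1[where 'a=rat]
    by (subst fps_times_divide_eq) (auto simp: fps_of_rat_X)
  finally show ?thesis
    by (metis fps_divide_times_eq subdegree_fps_exp_minus_1 subdegree_0 zero_neq_one)
qed

lemma of_real_of_rat: "of_real (of_rat q) = (of_rat q :: 'a::real_field)"
  by (cases q) (simp add: of_rat_rat)

definition bernoulli_gf :: "'a::{real_normed_field,banach} \<Rightarrow> 'a" where
  "bernoulli_gf z = (if z = 0 then 1 else z / (exp z - 1))"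

lemma bernoulli_gf_has_fps_expansion:
  "bernoulli_gf has_fps_expansion (fps_X / (fps_exp 1 - 1) :: 'a::{real_normed_field,banach} fps)"
proof -
  have "subdegree (fps_exp 1 - 1 :: 'a fps) = 1" "fps_exp 1 - 1 \<noteq> (0 :: 'a fps)"
    using subdegree_fps_exp_minus_1 by (auto simp flip: subdegree_0)
  then show ?thesis
    unfolding bernoulli_gf_def [abs_def]
    by (intro has_fps_expansion_divide has_fps_expansion_fps_X has_fps_expansion_diff
          has_fps_expansion_exp1 has_fps_expansion_1) auto
qed

lemma exp_eq_1_small_imp_zero:
  fixes z :: complex
  assumes "exp z = 1" "norm z < 2 * pi"
  shows "z = 0"
proof -
  obtain n :: int where "Re z = 0" "Im z = of_int (2 * n) * pi"
    using assms(1) by (auto simp: exp_eq_1)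
  moreover from this have "norm z = 2 * pi * \<bar>of_int n\<bar>"
    by (simp add: norm_complex_def abs_mult)
  ultimately show ?thesis
    using assms(2) by (auto simp: complex_eq_iff)
qed

lemma bernoulli_gf_holomorphic: "(bernoulli_gf :: complex \<Rightarrow> complex) holomorphic_on ball 0 (2 * pi)"
proof -
  have "(\<lambda>z. z / (exp z - 1)) holomorphic_on ball 0 (2 * pi) - {0::complex}"
    using exp_eq_1_small_imp_zero by (intro holomorphic_intros) auto
  then have "bernoulli_gf holomorphic_on ball 0 (2 * pi) - {0::complex}"
    by (rule holomorphic_transform) (simp add: bernoulli_gf_def)
  then have "bernoulli_gf analytic_on ball 0 (2 * pi) - {0::complex}"
    by (simp add: analytic_on_open open_Diff)
  moreover have "bernoulli_gf analytic_on {0::complex}"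
    using has_fps_expansion_imp_analytic_0[OF bernoulli_gf_has_fps_expansion] by simp
  ultimately have "bernoulli_gf analytic_on (ball 0 (2 * pi) - {0}) \<union> {0::complex}"
    unfolding analytic_on_Un by blast
  then show ?thesis
    by (auto intro: analytic_imp_holomorphic analytic_on_subset)
qed

lemma bernoulli_gf_of_real: "bernoulli_gf (complex_of_real u) = of_real (bernoulli_gf u)"
  by (simp add: bernoulli_gf_def exp_of_real)

lemma bernoulli_div_fact: "bernoulli n / fact n = of_rat (fps_nth (fps_X / (fps_exp 1 - 1)) n)"
  by (simp add: bernoulli_def of_rat_mult of_rat_fact)

lemma sums_bernoulli_gf:
  fixes u :: real
  assumes "\<bar>u\<bar> < 2 * pi"
  shows "(\<lambda>n. bernoulli n / fact n * u ^ n) sums bernoulli_gf u"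
proof -
  have "(\<lambda>n. fps_nth (fps_X / (fps_exp 1 - 1)) n * of_real u ^ n) sums bernoulli_gf (complex_of_real u)"
    by (rule has_fps_expansion_imp_sums_complex[OF bernoulli_gf_has_fps_expansion, of "ereal (2 * pi)"])
       (use bernoulli_gf_holomorphic assms in auto)
  moreover have "fps_nth (fps_X / (fps_exp 1 - 1)) n = complex_of_real (bernoulli n / fact n)" for n
    unfolding bernoulli_div_fact of_real_of_rat by (subst bernoulli_fps_of_rat) simp
  ultimately have "(\<lambda>n. complex_of_real (bernoulli n / fact n * u ^ n)) sums complex_of_real (bernoulli_gf u)"
    by (simp add: bernoulli_gf_of_real)
  then show ?thesis
    by (simp only: sums_of_real_iff)
qed

lemma summable_abs_bernoulli_series:
  fixes u :: real
  assumes "\<bar>u\<bar> < 2 * pi"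
  shows "summable (\<lambda>n. \<bar>bernoulli n / fact n * u ^ n\<bar>)"
proof -
  define r where "r = (\<bar>u\<bar> + 2 * pi) / 2"
  have r: "\<bar>u\<bar> < r" "\<bar>r\<bar> < 2 * pi"
    using assms by (auto simp: r_def)
  then have "summable (\<lambda>n. bernoulli n / fact n * r ^ n)"
    using sums_bernoulli_gf sums_summable by blast
  from powser_insidea[OF this] r show ?thesis by simp
qed

lemma has_integral_reflect_interval:
  fixes f :: "real \<Rightarrow> 'a::banach"
  assumes "(f has_integral I) {a..b}"
  shows "((\<lambda>t. f (a + b - t)) has_integral I) {a..b}"
proof -
  have "((\<lambda>t. f ((-1) *\<^sub>R t + (a + b))) has_integral (1 / \<bar>-1\<bar> ^ DIM(real)) *\<^sub>R I)
          ((\<lambda>t. (1 / -1) *\<^sub>R t + - ((1 / -1) *\<^sub>R (a + b))) ` cbox a b)"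
    by (rule has_integral_affinity) (use assms in auto)
  moreover have "(\<lambda>t. (1 / -1) *\<^sub>R t + - ((1 / -1) *\<^sub>R (a + b))) ` cbox a b = {a..b}"
    by (auto simp: image_iff intro!: bexI[where x="a + b - _"])
  ultimately show ?thesis by (simp add: algebra_simps)
qed

lemma expR_has_integral:
  assumes "0 \<le> y"
  shows "((\<lambda>t. exp (y - t) * t ^ n / fact n) has_integral expR n y) {0..y}"
proof -
  have "((\<lambda>u. (y - u) ^ n / fact n * exp u) has_integral expR n y) {0..y}"
    using Taylor_has_integral[of "Suc n" "\<lambda>_. exp" exp 0 y] assms
    by (auto intro!: DERIV_exp[THEN has_field_derivative_at_within]
        simp: has_real_derivative_iff_has_vector_derivative[symmetric] expR_def lessThan_Suc_atMost)
  from has_integral_reflect_interval[OF this] show ?thesis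
    by (simp add: mult_ac)
qed

lemma has_integral_suminf_Weierstrass:
  fixes f :: "nat \<Rightarrow> real \<Rightarrow> 'a::banach"
  assumes "\<And>n t. t \<in> {a..b} \<Longrightarrow> norm (f n t) \<le> M n" and "summable M"
    and "\<And>n. continuous_on {a..b} (f n)"
    and I: "\<And>n. (f n has_integral I n) {a..b}"
  obtains J where "I sums J" and "((\<lambda>t. \<Sum>n. f n t) has_integral J) {a..b}"
proof -
  obtain P J where P: "\<And>N. ((\<lambda>t. \<Sum>n<N. f n t) has_integral P N) {a..b}"
    and J: "((\<lambda>t. \<Sum>n. f n t) has_integral J) {a..b}" and "P \<longlonglongrightarrow> J"
    by (rule uniform_limit_integral[OF Weierstrass_m_test])
       (use assms in \<open>auto intro!: continuous_on_sum\<close>)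
  moreover have "P = (\<lambda>N. \<Sum>n<N. I n)"
    by (rule ext, rule has_integral_unique[OF P has_integral_sum]) (use I in auto)
  ultimately have "I sums J"
    by (simp add: sums_def)
  with J that show ?thesis by blast
qed

lemma bernoulli_series_has_integral:
  fixes x y :: real
  assumes "x > 0" "y > 0" "x * y < 2 * pi"
  obtains J where "(\<lambda>n. bernoulli n * expR n y * x ^ n) sums J"
    and "((\<lambda>t. exp (y - t) * bernoulli_gf (x * t)) has_integral J) {0..y}"
proof -
  define f where "f n t = exp (y - t) * (bernoulli n / fact n * (x * t) ^ n)" for n t
  define M where "M n = exp y * \<bar>bernoulli n / fact n * (x * y) ^ n\<bar>" for n
  have "norm (f n t) \<le> M n" if "t \<in> {0..y}" for n t
  proof -
    have "norm (f n t) = exp (y - t) * (\<bar>bernoulli n / fact n\<bar> * (x * t) ^ n)"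
      using that assms by (simp add: f_def abs_mult power_abs)
    also have "\<dots> \<le> M n"
      using that assms unfolding M_def abs_mult power_abs
      by (intro mult_mono power_mono mult_left_mono) auto
    finally show ?thesis .
  qed
  moreover have "summable M"
    unfolding M_def using assms by (intro summable_mult summable_abs_bernoulli_series) auto
  moreover have "continuous_on {0..y} (f n)" for n
    unfolding f_def by (intro continuous_intros)
  moreover have "(f n has_integral bernoulli n * expR n y * x ^ n) {0..y}" for n
  proof -
    have "((\<lambda>t. bernoulli n * x ^ n * (exp (y - t) * t ^ n / fact n)) has_integral
            bernoulli n * x ^ n * expR n y) {0..y}"
      using assms by (intro has_integral_mult_right expR_has_integral) auto
    moreover have "(\<lambda>t. bernoulli n * x ^ n * (exp (y - t) * t ^ n / fact n)) = f n"
      by (auto simp: fun_eq_iff f_def power_mult_distrib)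
    ultimately show ?thesis by (simp add: mult_ac)
  qed
  ultimately obtain J where J: "(\<lambda>n. bernoulli n * expR n y * x ^ n) sums J"
    "((\<lambda>t. \<Sum>n. f n t) has_integral J) {0..y}"
    by (rule has_integral_suminf_Weierstrass)
  have sum_f: "(\<Sum>n. f n t) = exp (y - t) * bernoulli_gf (x * t)" if "t \<in> {0..y}" for t
  proof -
    have "0 \<le> x * t" "x * t \<le> x * y"
      using that assms by (auto intro: mult_left_mono)
    then have "\<bar>x * t\<bar> < 2 * pi"
      using assms(3) abs_of_nonneg[of "x * t"] by linarith
    from sums_mult[OF sums_bernoulli_gf[OF this], of "exp (y - t)"] show ?thesis
      by (simp add: f_def sums_iff)
  qed
  have "((\<lambda>t. \<Sum>n. f n t) has_integral J) {0..y} \<longleftrightarrow>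
        ((\<lambda>t. exp (y - t) * bernoulli_gf (x * t)) has_integral J) {0..y}"
    by (rule has_integral_cong) (rule sum_f)
  with J show ?thesis
    using that by blast
qed

lemma exp_minus_1_times_geometric_sum:
  fixes u :: real
  shows "(exp u - 1) * (\<Sum>k=1..K. exp (- (real k * u))) = 1 - exp (- (real K * u))"
proof (induction K)
  case (Suc K)
  have "exp u * exp (- (real (Suc K) * u)) = exp (- (real K * u))"
    by (simp add: exp_add [symmetric] algebra_simps)
  with Suc show ?case
    by (simp add: algebra_simps)
qed simp

lemma bernoulli_gf_geometric_expansion:
  fixes u :: real
  shows "bernoulli_gf u = u * (\<Sum>k=1..K. exp (- (real k * u))) + bernoulli_gf u * exp (- (real K * u))"
proof (cases "u = 0")
  case False
  then have "exp u - 1 \<noteq> 0" by simp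
  moreover have "u * ((exp u - 1) * (\<Sum>k=1..K. exp (- (real k * u)))) = u * (1 - exp (- (real K * u)))"
    by (simp only: exp_minus_1_times_geometric_sum)
  ultimately show ?thesis
    using False by (simp add: bernoulli_gf_def field_simps)
qed (simp add: bernoulli_gf_def)

lemma bernoulli_gf_nonneg_le_1:
  fixes u :: real
  assumes "0 \<le> u"
  shows "0 \<le> bernoulli_gf u" "bernoulli_gf u \<le> 1"
proof -
  have "u \<le> exp u - 1"
    using exp_ge_add_one_self[of u] by linarith
  with assms show "0 \<le> bernoulli_gf u" "bernoulli_gf u \<le> 1"
    by (auto simp: bernoulli_gf_def)
qed

lemma has_integral_exp_decay:
  fixes c y :: real
  assumes "c \<noteq> 0" "0 \<le> y"
  shows "((\<lambda>t. exp (- (c * t))) has_integral (1 - exp (- (c * y))) / c) {0..y}"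
proof -
  have "((\<lambda>t. - exp (- (c * t)) / c) has_real_derivative exp (- (c * t))) (at t)" for t
    using assms by (auto intro!: derivative_eq_intros)
  then have "((\<lambda>t. exp (- (c * t))) has_integral
               - exp (- (c * y)) / c - (- exp (- (c * 0)) / c)) {0..y}"
    using assms by (intro fundamental_theorem_of_calculus)
      (auto simp: has_real_derivative_iff_has_vector_derivative [symmetric] intro: has_field_derivative_at_within)
  then show ?thesis
    by (simp add: diff_divide_distrib)
qed

lemma has_integral_mult_exp_decay:
  fixes b y :: real
  assumes "b \<noteq> 0" "0 \<le> y"
  shows "((\<lambda>t. t * exp (- (b * t))) has_integral 1 / b\<^sup>2 - (y / b + 1 / b\<^sup>2) * exp (- (b * y))) {0..y}"
proof -
  define P where "P t = - (t / b + 1 / b\<^sup>2) * exp (- (b * t))" for t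
  have "(P has_real_derivative t * exp (- (b * t))) (at t)" for t
    unfolding P_def using assms
    by (auto intro!: derivative_eq_intros simp: field_simps power2_eq_square)
  then have "((\<lambda>t. t * exp (- (b * t))) has_integral P y - P 0) {0..y}"
    using assms by (intro fundamental_theorem_of_calculus)
      (auto simp: has_real_derivative_iff_has_vector_derivative [symmetric] intro: has_field_derivative_at_within)
  then show ?thesis
    by (simp add: P_def algebra_simps)
qed

definition kernel_integral :: "real \<Rightarrow> real \<Rightarrow> nat \<Rightarrow> real" where
  "kernel_integral x y k = x * exp y *
     (1 / (1 + real k * x)\<^sup>2
      - (y / (1 + real k * x) + 1 / (1 + real k * x)\<^sup>2) * exp (- ((1 + real k * x) * y)))"

lemma kernel_integral_has_integral:
  assumes "0 \<le> x" "0 \<le> y"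
  shows "((\<lambda>t. exp (y - t) * (x * t * exp (- (real k * (x * t))))) has_integral
           kernel_integral x y k) {0..y}"
proof -
  have exp_eq: "exp y * exp (- ((1 + real k * x) * t)) = exp (y - t) * exp (- (real k * (x * t)))" for t
    by (simp add: mult_exp_exp algebra_simps)
  have "0 < 1 + real k * x"
    using assms by (simp add: add_pos_nonneg)
  then have "((\<lambda>t. x * exp y * (t * exp (- ((1 + real k * x) * t)))) has_integral
               kernel_integral x y k) {0..y}"
    unfolding kernel_integral_def using assms
    by (intro has_integral_mult_right has_integral_mult_exp_decay) auto
  moreover have "x * exp y * (t * exp (- ((1 + real k * x) * t)))
                  = exp (y - t) * (x * t * exp (- (real k * (x * t))))" for t
    using exp_eq by (metis mult.assoc mult.left_commute)
  ultimately show ?thesis by simp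
qed

lemma kernel_integral_partial_sum_bound:
  fixes x y J :: real
  assumes "0 < x" "0 \<le> y" "1 \<le> K"
    and J: "((\<lambda>t. exp (y - t) * bernoulli_gf (x * t)) has_integral J) {0..y}"
  shows "\<bar>(\<Sum>k=1..K. kernel_integral x y k) - J\<bar> \<le> exp y / (x * real K)"
proof -
  define \<rho> where "\<rho> t = exp (y - t) * bernoulli_gf (x * t) * exp (- (real K * (x * t)))" for t
  have "exp (y - t) * bernoulli_gf (x * t)
          = (\<Sum>k=1..K. exp (y - t) * (x * t * exp (- (real k * (x * t))))) + \<rho> t" for t
    by (subst bernoulli_gf_geometric_expansion[of "x * t" K])
       (simp add: \<rho>_def sum_distrib_left algebra_simps)
  then have "\<rho> = (\<lambda>t. exp (y - t) * bernoulli_gf (x * t)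
                   - (\<Sum>k=1..K. exp (y - t) * (x * t * exp (- (real k * (x * t))))))"
    by (auto simp: fun_eq_iff)
  then have \<rho>: "(\<rho> has_integral J - (\<Sum>k=1..K. kernel_integral x y k)) {0..y}"
    using assms by (simp add: has_integral_diff has_integral_sum kernel_integral_has_integral J)
  have "0 \<le> \<rho> t \<and> \<rho> t \<le> exp y * exp (- ((real K * x) * t))" if "t \<in> {0..y}" for t
  proof -
    have "0 \<le> bernoulli_gf (x * t)" "bernoulli_gf (x * t) \<le> 1"
      using that assms bernoulli_gf_nonneg_le_1[of "x * t"] by auto
    moreover have "exp (y - t) \<le> exp y"
      using that by simp
    ultimately have "exp (y - t) * bernoulli_gf (x * t) \<le> exp y"
      using mult_mono[of "exp (y - t)" "exp y" "bernoulli_gf (x * t)" 1] by simp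
    with \<open>0 \<le> bernoulli_gf (x * t)\<close> show ?thesis
      by (simp add: \<rho>_def mult_right_mono mult_ac)
  qed
  moreover have "((\<lambda>t. exp y * exp (- ((real K * x) * t))) has_integral
                   exp y * ((1 - exp (- ((real K * x) * y))) / (real K * x))) {0..y}"
    using assms by (intro has_integral_mult_right has_integral_exp_decay) auto
  ultimately have "0 \<le> J - (\<Sum>k=1..K. kernel_integral x y k)"
    "J - (\<Sum>k=1..K. kernel_integral x y k) \<le> exp y * ((1 - exp (- ((real K * x) * y))) / (real K * x))"
    using has_integral_nonneg[OF \<rho>] has_integral_le[OF \<rho>] by auto
  moreover have "exp y * ((1 - exp (- ((real K * x) * y))) / (real K * x)) \<le> exp y / (x * real K)"
    using assms by (simp add: divide_right_mono mult_ac)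
  ultimately show ?thesis by simp
qed

lemma sums_kernel_integral:
  fixes x y J :: real
  assumes "0 < x" "0 \<le> y"
    and "((\<lambda>t. exp (y - t) * bernoulli_gf (x * t)) has_integral J) {0..y}"
  shows "(\<lambda>k. kernel_integral x y (Suc k)) sums J"
proof -
  have "(\<lambda>K. (\<Sum>k=1..K. kernel_integral x y k) - J) \<longlonglongrightarrow> 0"
  proof (rule Lim_null_comparison)
    show "\<forall>\<^sub>F K in sequentially. norm ((\<Sum>k=1..K. kernel_integral x y k) - J) \<le> exp y / x / real K"
      using eventually_ge_at_top[of 1]
      by eventually_elim (use kernel_integral_partial_sum_bound[OF assms(1,2)] assms(3) in auto)
    show "(\<lambda>K. exp y / x / real K) \<longlonglongrightarrow> 0"
      by (rule lim_const_over_n)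
  qed
  then show ?thesis
    by (simp add: sums_def sum_bounds_lt_plus1 LIM_zero_iff)
qed

lemma lerch_sums:
  assumes "\<bar>z\<bar> < 1" "0 < a"
  shows "(\<lambda>n. z ^ n / (real n + a) ^ s) sums lerch z s a"
proof -
  have bound: "norm (z ^ n / (real n + a) ^ s) \<le> \<bar>z\<bar> ^ n / a ^ s" for n
  proof -
    have "a ^ s \<le> (real n + a) ^ s"
      using assms by (intro power_mono) auto
    then show ?thesis
      using assms by (simp add: abs_divide power_abs divide_left_mono)
  qed
  have "summable (\<lambda>n. \<bar>z\<bar> ^ n / a ^ s)"
    using assms by (intro summable_divide summable_geometric) simp
  then have "summable (\<lambda>n. z ^ n / (real n + a) ^ s)"
    by (rule summable_comparison_test') (rule bound)
  then show ?thesis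
    unfolding lerch_def by (rule summable_sums)
qed

lemma lerch_1_sums:
  assumes "2 \<le> s" "0 < a"
  shows "(\<lambda>n. 1 / (real n + a) ^ s) sums lerch 1 s a"
proof -
  have bound: "norm (1 / (real n + a) ^ s) \<le> inverse (real n ^ s)" if "1 \<le> n" for n
  proof -
    have "real n ^ s \<le> (real n + a) ^ s"
      using assms by (intro power_mono) auto
    then show ?thesis
      using that assms by (simp add: divide_simps)
  qed
  have "summable (\<lambda>n. inverse (real n ^ s))"
    using inverse_power_summable[OF assms(1)] by simp
  then have "summable (\<lambda>n. 1 / (real n + a) ^ s)"
    by (rule summable_comparison_test') (rule bound)
  then show ?thesis
    unfolding lerch_def by (simp add: summable_sums)
qed

text \<open>The exponent \<open>1\<close> is kept so that the terms are literally the summands of \<open>lerch\<close>.\<close>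

lemma kernel_integral_eq_lerch_terms:
  fixes x y :: real
  assumes "0 < x"
  defines "z \<equiv> exp (- x * y)"
  shows "kernel_integral x y k = exp y / x * (1 / (real k + 1 / x) ^ 2)
           - y * (z ^ k / (real k + 1 / x) ^ 1) - 1 / x * (z ^ k / (real k + 1 / x) ^ 2)"
proof -
  define b where "b = 1 + real k * x"
  have "0 < b"
    using assms by (simp add: b_def add_pos_nonneg)
  have "kernel_integral x y k = x * exp y / b\<^sup>2 - x * (y / b + 1 / b\<^sup>2) * (exp y * exp (- (b * y)))"
    unfolding kernel_integral_def b_def [symmetric] by (simp add: algebra_simps)
  also have "exp y * exp (- (b * y)) = z ^ k"
    by (simp add: z_def b_def mult_exp_exp exp_of_nat_mult [symmetric] algebra_simps)
  finally have integral: "kernel_integral x y k = x * exp y / b\<^sup>2 - x * (y / b + 1 / b\<^sup>2) * z ^ k" .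
  have "real k + 1 / x = b / x"
    using assms by (simp add: b_def field_simps)
  then show ?thesis
    unfolding integral using assms \<open>0 < b\<close> by (simp add: field_simps power2_eq_square)
qed

lemma kernel_integral_sums_lerch:
  assumes "0 < x" "0 < y"
  shows "kernel_integral x y sums (exp y / x * lerch 1 2 (1 / x) - y * lerch (exp (- x * y)) 1 (1 / x)
                                     - 1 / x * lerch (exp (- x * y)) 2 (1 / x))"
proof -
  have "kernel_integral x y = (\<lambda>k. exp y / x * (1 / (real k + 1 / x) ^ 2)
          - y * (exp (- x * y) ^ k / (real k + 1 / x) ^ 1)
          - 1 / x * (exp (- x * y) ^ k / (real k + 1 / x) ^ 2))"
    using kernel_integral_eq_lerch_terms[OF assms(1)] by blast
  moreover have "\<bar>exp (- x * y)\<bar> < 1"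
    using assms by simp
  ultimately show ?thesis
    using assms by (simp only:) (intro sums_diff sums_mult lerch_sums lerch_1_sums; simp)
qed

theorem mainTheorem5:
  fixes x y :: real
  assumes "x > 0" and "y > 0" and "x * y < 2 * pi"
  shows "(\<lambda>n. bernoulli n * expR n y * x ^ n) sums
           (exp y / x * lerch 1 2 (1 / x) - y * lerch (exp (- x * y)) 1 (1 / x)
            - 1 / x * lerch (exp (- x * y)) 2 (1 / x) + x * (y + 1 - exp y))"
proof -
  obtain J where series: "(\<lambda>n. bernoulli n * expR n y * x ^ n) sums J"
    and J: "((\<lambda>t. exp (y - t) * bernoulli_gf (x * t)) has_integral J) {0..y}"
    using bernoulli_series_has_integral assms by blast
  have "(\<lambda>k. kernel_integral x y (Suc k)) sums J"
    using sums_kernel_integral J assms by simp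
  then have "kernel_integral x y sums (J + kernel_integral x y 0)"
    by (simp add: sums_Suc_iff)
  moreover have "kernel_integral x y 0 = - x * (y + 1 - exp y)"
    by (simp add: kernel_integral_def algebra_simps exp_minus_inverse)
  ultimately have "J = exp y / x * lerch 1 2 (1 / x) - y * lerch (exp (- x * y)) 1 (1 / x)
                     - 1 / x * lerch (exp (- x * y)) 2 (1 / x) + x * (y + 1 - exp y)"
    using sums_unique2[OF _ kernel_integral_sums_lerch[OF assms(1,2)]] by fastforce
  with series show ?thesis by simp
qed

end
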